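(* For any DRC-semigroup $S$, the category $\mathcal C(S)$ is a biordered category under the orders $\le_l,\le_r$ defined by $a\le_l b\iff a=pb$ for some $p\in\mathbf P(S)$ with $p\le D(b)$, and $a\le_r b\iff a=bq$ for some $q\in\mathbf P(S)$ with $q\le R(b)$; its left and right restrictions are ${}_p\lfloor a=pa$ ($p\le D(a)$) and $a\rfloor_q=aq$ ($q\le R(a)$).
   Context: A DRC-semigroup is $(S,\cdot,D,R)$, $(S,\cdot)$ a semigroup, $D,R:S\to S$ with, for all $a,b$: $D(a)a=a$, $aR(a)=a$; $D(ab)=D(aD(b))$, $R(ab)=R(R(a)b)$; $D(ab)=D(a)D(ab)D(a)$, $R(ab)=R(b)R(ab)R(b)$; $R(D(a))=D(a)$, $D(R(a))=R(a)$. Projections: $\mathbf P(S)=\{D(a):a\in S\}$, partially ordered by $p\le q\iff p=pq=qp$. The small category $\mathcal C(S)$ has morphism set $S$, object (identity) set $\mathbf P(S)$, domain $\mathbf d(a)=D(a)$, codomain $\mathbf r(a)=R(a)$, and composition $a\circ b=ab$ defined when $R(a)=D(b)$. A small category is identified with its morphisms, and objects with identities ($v\mathcal C$); $a\circ b$ is defined iff $\mathbf r(a)=\mathbf d(b)$. A left-ordered category is $(\mathcal C,\le)$ with a partial order such that: $a\le b\Rightarrow\mathbf d(a)\le\mathbf d(b)$, $\mathbf r(a)\le\mathbf r(b)$; if $a\le b$, $c\le c'$, $\mathbf r(a)=\mathbf d(c)$, $\mathbf r(b)=\mathbf d(c')$ then $a\circ c\le b\circ c'$; for every object $p\le\mathbf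 d(a)$ there is a unique $u\le a$ with $\mathbf d(u)=p$ (the left restriction ${}_p\lfloor a$). A right-ordered category is defined dually (unique $v\le a$ with $\mathbf r(v)=q$ for each object $q\le\mathbf r(a)$, denoted $a\rfloor_q$). A biordered category is $(\mathcal C,\le_l,\le_r)$ with $(\mathcal C,\le_l)$ left-ordered, $(\mathcal C,\le_r)$ right-ordered, and $\le_l,\le_r$ restricting to the same order on objects. *)

theory Defs
  imports Main
begin

definition DRC_semigroup :: "('a::semigroup_mult \<Rightarrow> 'a) \<Rightarrow> ('a \<Rightarrow> 'a) \<Rightarrow> bool" where
  "DRC_semigroup D R \<longleftrightarrow>
     (\<forall>a. D a * a = a) \<and> (\<forall>a. a * R a = a) \<and>
     (\<forall>a b. D (a * b) = D (a * D b)) \<and> (\<forall>a b. R (a * b) = R (R a * b)) \<and>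
     (\<forall>a b. D (a * b) = D a * D (a * b) * D a) \<and>
     (\<forall>a b. R (a * b) = R b * R (a * b) * R b) \<and>
     (\<forall>a. R (D a) = D a) \<and> (\<forall>a. D (R a) = R a)"

definition projections :: "('a \<Rightarrow> 'a) \<Rightarrow> 'a set" where
  "projections D = range D"

definition proj_le :: "'a::semigroup_mult \<Rightarrow> 'a \<Rightarrow> bool" where
  "proj_le p q \<longleftrightarrow> p = p * q \<and> p = q * p"

definition drc_le_l :: "('a::semigroup_mult \<Rightarrow> 'a) \<Rightarrow> 'a \<Rightarrow> 'a \<Rightarrow> bool" where
  "drc_le_l D a b \<longleftrightarrow> (\<exists>p \<in> projections D. proj_le p (D b) \<and> a = p * b)"

definition drc_le_r :: "('a::semigroup_mult \<Rightarrow> 'a) \<Rightarrow> ('a \<Rightarrow> 'a) \<Rightarrow> 'a \<Rightarrow> 'a \<Rightarrow> bool" where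
  "drc_le_r D R a b \<longleftrightarrow> (\<exists>q \<in> projections D. proj_le q (R b) \<and> a = b * q)"

text \<open>A small category on morphism set C with domain dd, codomain rr and composition cmp;
  cmp a b is meaningful (defined) exactly when rr a = dd b.  Objects are identified
  with identity morphisms.\<close>
definition small_category ::
  "'a set \<Rightarrow> ('a \<Rightarrow> 'a) \<Rightarrow> ('a \<Rightarrow> 'a) \<Rightarrow> ('a \<Rightarrow> 'a \<Rightarrow> 'a) \<Rightarrow> bool" where
  "small_category C dd rr cmp \<longleftrightarrow>
     (\<forall>a\<in>C. dd a \<in> C \<and> rr a \<in> C \<and>
              dd (dd a) = dd a \<and> rr (dd a) = dd a \<and>
              dd (rr a) = rr a \<and> rr (rr a) = rr a \<and>
              cmp (dd a) a = a \<and> cmp a (rr a) = a) \<and>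
     (\<forall>a\<in>C. \<forall>b\<in>C. rr a = dd b \<longrightarrow>
              cmp a b \<in> C \<and> dd (cmp a b) = dd a \<and> rr (cmp a b) = rr b) \<and>
     (\<forall>a\<in>C. \<forall>b\<in>C. \<forall>c\<in>C. rr a = dd b \<longrightarrow> rr b = dd c \<longrightarrow>
              cmp (cmp a b) c = cmp a (cmp b c))"

definition cat_objects :: "'a set \<Rightarrow> ('a \<Rightarrow> 'a) \<Rightarrow> 'a set" where
  "cat_objects C dd = {e \<in> C. dd e = e}"

definition partial_order_on_set :: "'a set \<Rightarrow> ('a \<Rightarrow> 'a \<Rightarrow> bool) \<Rightarrow> bool" where
  "partial_order_on_set C le \<longleftrightarrow>
     (\<forall>a b. le a b \<longrightarrow> a \<in> C \<and> b \<in> C) \<and>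
     (\<forall>a\<in>C. le a a) \<and>
     (\<forall>a\<in>C. \<forall>b\<in>C. le a b \<longrightarrow> le b a \<longrightarrow> a = b) \<and>
     (\<forall>a\<in>C. \<forall>b\<in>C. \<forall>c\<in>C. le a b \<longrightarrow> le b c \<longrightarrow> le a c)"

definition ordered_category_core ::
  "'a set \<Rightarrow> ('a \<Rightarrow> 'a) \<Rightarrow> ('a \<Rightarrow> 'a) \<Rightarrow> ('a \<Rightarrow> 'a \<Rightarrow> 'a) \<Rightarrow> ('a \<Rightarrow> 'a \<Rightarrow> bool) \<Rightarrow> bool" where
  "ordered_category_core C dd rr cmp le \<longleftrightarrow>
     small_category C dd rr cmp \<and> partial_order_on_set C le \<and>
     (\<forall>a b. le a b \<longrightarrow> le (dd a) (dd b) \<and> le (rr a) (rr b)) \<and>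
     (\<forall>a b c c'. le a b \<longrightarrow> le c c' \<longrightarrow> rr a = dd c \<longrightarrow> rr b = dd c' \<longrightarrow>
                 le (cmp a c) (cmp b c'))"

definition left_ordered_category ::
  "'a set \<Rightarrow> ('a \<Rightarrow> 'a) \<Rightarrow> ('a \<Rightarrow> 'a) \<Rightarrow> ('a \<Rightarrow> 'a \<Rightarrow> 'a) \<Rightarrow> ('a \<Rightarrow> 'a \<Rightarrow> bool) \<Rightarrow> bool" where
  "left_ordered_category C dd rr cmp le \<longleftrightarrow>
     ordered_category_core C dd rr cmp le \<and>
     (\<forall>a\<in>C. \<forall>p\<in>cat_objects C dd. le p (dd a) \<longrightarrow> (\<exists>!u. le u a \<and> dd u = p))"

definition right_ordered_category ::
  "'a set \<Rightarrow> ('a \<Rightarrow> 'a) \<Rightarrow> ('a \<Rightarrow> 'a) \<Rightarrow> ('a \<Rightarrow> 'a \<Rightarrow> 'a) \<Rightarrow> ('a \<Rightarrow> 'a \<Rightarrow> bool) \<Rightarrow> bool" where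
  "right_ordered_category C dd rr cmp le \<longleftrightarrow>
     ordered_category_core C dd rr cmp le \<and>
     (\<forall>a\<in>C. \<forall>q\<in>cat_objects C dd. le q (rr a) \<longrightarrow> (\<exists>!v. le v a \<and> rr v = q))"

definition biordered_category ::
  "'a set \<Rightarrow> ('a \<Rightarrow> 'a) \<Rightarrow> ('a \<Rightarrow> 'a) \<Rightarrow> ('a \<Rightarrow> 'a \<Rightarrow> 'a)
     \<Rightarrow> ('a \<Rightarrow> 'a \<Rightarrow> bool) \<Rightarrow> ('a \<Rightarrow> 'a \<Rightarrow> bool) \<Rightarrow> bool" where
  "biordered_category C dd rr cmp le_l le_r \<longleftrightarrow>
     left_ordered_category C dd rr cmp le_l \<and>
     right_ordered_category C dd rr cmp le_r \<and>
     (\<forall>p\<in>cat_objects C dd. \<forall>q\<in>cat_objects C dd. le_l p q \<longleftrightarrow> le_r p q)"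

definition left_restriction :: "('a \<Rightarrow> 'a) \<Rightarrow> ('a \<Rightarrow> 'a \<Rightarrow> bool) \<Rightarrow> 'a \<Rightarrow> 'a \<Rightarrow> 'a" where
  "left_restriction dd le p a = (THE u. le u a \<and> dd u = p)"

definition right_restriction :: "('a \<Rightarrow> 'a) \<Rightarrow> ('a \<Rightarrow> 'a \<Rightarrow> bool) \<Rightarrow> 'a \<Rightarrow> 'a \<Rightarrow> 'a" where
  "right_restriction rr le a q = (THE v. le v a \<and> rr v = q)"

end

theory Submission
  imports Defs
begin

text \<open>Both orders are governed by the projections alone: \<open>a \<le>\<^sub>l b\<close> holds iff
  \<open>D a \<le> D b\<close> and \<open>a = D a * b\<close>, and dually \<open>a \<le>\<^sub>r b\<close> iff \<open>R a \<le> R b\<close> and \<open>a = b * R a\<close>.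
  Since \<open>D (p * b) = p\<close> for every projection \<open>p \<le> D b\<close>, the element below \<open>b\<close> with
  domain \<open>p\<close> can only be \<open>p * b\<close>, which gives the restrictions.  The sandwich axioms say
  \<open>D (a * b) \<le> D a\<close> and \<open>R (a * b) \<le> R b\<close>; applied to \<open>a = D a * b\<close> (resp. \<open>a = b * R a\<close>)
  they make codomains monotone for \<open>\<le>\<^sub>l\<close> and domains monotone for \<open>\<le>\<^sub>r\<close>.\<close>

lemma proj_le_refl: "p * p = p \<Longrightarrow> proj_le p p"
  unfolding proj_le_def by simp

lemma proj_le_antisym: "proj_le p q \<Longrightarrow> proj_le q p \<Longrightarrow> p = q"
  unfolding proj_le_def by metis

lemma proj_le_trans: "proj_le p q \<Longrightarrow> proj_le q r \<Longrightarrow> proj_le p r"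
  unfolding proj_le_def by (metis mult.assoc)

lemma proj_le_sandwich:
  assumes "q * q = q" and "p = q * p * q"
  shows "proj_le p q"
  unfolding proj_le_def by (metis assms mult.assoc)

locale drc_semigroup =
  fixes D R :: "'a::semigroup_mult \<Rightarrow> 'a"
  assumes DRC: "DRC_semigroup D R"
begin

lemma D_mult_self: "D a * a = a"
  and mult_R_self: "a * R a = a"
  and D_mult_D: "D (a * b) = D (a * D b)"
  and R_R_mult: "R (a * b) = R (R a * b)"
  and D_mult_sandwich: "D (a * b) = D a * D (a * b) * D a"
  and R_mult_sandwich: "R (a * b) = R b * R (a * b) * R b"
  and R_D: "R (D a) = D a"
  and D_R: "D (R a) = R a"
  using DRC unfolding DRC_semigroup_def by blast+

lemma D_D: "D (D a) = D a"
  by (metis R_D D_R)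

lemma R_R: "R (R a) = R a"
  by (metis R_D D_R)

lemma D_idem: "D a * D a = D a"
  by (metis D_mult_self D_D)

lemma R_idem: "R a * R a = R a"
  by (metis mult_R_self R_R)

lemma projections_eq: "projections D = {p. D p = p}"
  unfolding projections_def by (auto simp: D_D) (metis rangeI)

lemma cat_objects_eq_projections: "cat_objects UNIV D = projections D"
  unfolding cat_objects_def projections_eq by simp

lemma D_mult_le: "proj_le (D (a * b)) (D a)"
  using proj_le_sandwich[OF D_idem D_mult_sandwich] .

lemma R_mult_le: "proj_le (R (a * b)) (R b)"
  using proj_le_sandwich[OF R_idem R_mult_sandwich] .

lemma D_proj_mult: "proj_le p (D b) \<Longrightarrow> D p = p \<Longrightarrow> D (p * b) = p"
  unfolding proj_le_def by (metis D_mult_D)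

lemma R_mult_proj: "proj_le q (R b) \<Longrightarrow> D q = q \<Longrightarrow> R (b * q) = q"
  unfolding proj_le_def by (metis R_R_mult R_D)

lemma D_mult_composable: "R a = D b \<Longrightarrow> D (a * b) = D a"
  by (metis D_mult_D mult_R_self)

lemma R_mult_composable: "R a = D b \<Longrightarrow> R (a * b) = R b"
  by (metis R_R_mult D_mult_self)

lemma small_category: "small_category UNIV D R (*)"
  unfolding small_category_def
  by (simp add: D_D R_R R_D D_R D_mult_self mult_R_self D_mult_composable
      R_mult_composable mult.assoc)

lemma drc_le_l_iff: "drc_le_l D a b \<longleftrightarrow> proj_le (D a) (D b) \<and> a = D a * b"
proof
  assume "drc_le_l D a b"
  then obtain p where "D p = p" "proj_le p (D b)" "a = p * b"
    unfolding drc_le_l_def projections_eq by blast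
  moreover from this have "D a = p"
    using D_proj_mult by blast
  ultimately show "proj_le (D a) (D b) \<and> a = D a * b"
    by simp
next
  assume "proj_le (D a) (D b) \<and> a = D a * b"
  then show "drc_le_l D a b"
    unfolding drc_le_l_def projections_def by blast
qed

lemma drc_le_r_iff: "drc_le_r D R a b \<longleftrightarrow> proj_le (R a) (R b) \<and> a = b * R a"
proof
  assume "drc_le_r D R a b"
  then obtain q where "D q = q" "proj_le q (R b)" "a = b * q"
    unfolding drc_le_r_def projections_eq by blast
  moreover from this have "R a = q"
    using R_mult_proj by blast
  ultimately show "proj_le (R a) (R b) \<and> a = b * R a"
    by simp
next
  assume "proj_le (R a) (R b) \<and> a = b * R a"
  moreover have "R a \<in> projections D"
    unfolding projections_eq by (simp add: D_R)
  ultimately show "drc_le_r D R a b"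
    unfolding drc_le_r_def by blast
qed

lemma drc_le_l_objects: "D p = p \<Longrightarrow> D q = q \<Longrightarrow> drc_le_l D p q \<longleftrightarrow> proj_le p q"
  unfolding drc_le_l_iff proj_le_def by metis

lemma drc_le_r_objects: "D p = p \<Longrightarrow> D q = q \<Longrightarrow> drc_le_r D R p q \<longleftrightarrow> proj_le p q"
  unfolding drc_le_r_iff proj_le_def by (metis R_D)

lemma partial_order_drc_le_l: "partial_order_on_set UNIV (drc_le_l D)"
proof -
  have "drc_le_l D a a" for a
    by (simp add: drc_le_l_iff proj_le_refl D_idem D_mult_self)
  moreover have "a = b" if "drc_le_l D a b" "drc_le_l D b a" for a b
    using that unfolding drc_le_l_iff by (metis proj_le_antisym D_mult_self)
  moreover have "drc_le_l D a c" if "drc_le_l D a b" "drc_le_l D b c" for a b c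
  proof -
    from that have "proj_le (D a) (D c)"
      unfolding drc_le_l_iff using proj_le_trans by blast
    moreover from that have "a = D a * c"
      unfolding drc_le_l_iff proj_le_def by (metis mult.assoc)
    ultimately show ?thesis
      unfolding drc_le_l_iff by blast
  qed
  ultimately show ?thesis
    unfolding partial_order_on_set_def by blast
qed

lemma partial_order_drc_le_r: "partial_order_on_set UNIV (drc_le_r D R)"
proof -
  have "drc_le_r D R a a" for a
    by (simp add: drc_le_r_iff proj_le_refl R_idem mult_R_self)
  moreover have "a = b" if "drc_le_r D R a b" "drc_le_r D R b a" for a b
    using that unfolding drc_le_r_iff by (metis proj_le_antisym mult_R_self)
  moreover have "drc_le_r D R a c" if "drc_le_r D R a b" "drc_le_r D R b c" for a b c
  proof -
    from that have "proj_le (R a) (R c)"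
      unfolding drc_le_r_iff using proj_le_trans by blast
    moreover from that have "a = c * R a"
      unfolding drc_le_r_iff proj_le_def by (metis mult.assoc)
    ultimately show ?thesis
      unfolding drc_le_r_iff by blast
  qed
  ultimately show ?thesis
    unfolding partial_order_on_set_def by blast
qed

lemma ordered_category_drc_le_l: "ordered_category_core UNIV D R (*) (drc_le_l D)"
proof -
  have "drc_le_l D (D a) (D b) \<and> drc_le_l D (R a) (R b)" if "drc_le_l D a b" for a b
  proof -
    from that have "proj_le (D a) (D b)" and "a = D a * b"
      unfolding drc_le_l_iff by simp_all
    moreover from \<open>a = D a * b\<close> have "proj_le (R a) (R b)"
      by (metis R_mult_le)
    ultimately show ?thesis
      by (simp add: drc_le_l_objects D_D D_R)
  qed
  moreover have "drc_le_l D (a * c) (b * c')"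
    if "drc_le_l D a b" "drc_le_l D c c'" "R a = D c" "R b = D c'" for a b c c'
  proof -
    from that have "a * c = a * R a * c'"
      unfolding drc_le_l_iff by (metis mult.assoc)
    also have "\<dots> = D a * (b * c')"
      using \<open>drc_le_l D a b\<close> unfolding drc_le_l_iff by (metis mult_R_self mult.assoc)
    finally have "a * c = D a * (b * c')" .
    moreover have "D (a * c) = D a" and "D (b * c') = D b"
      using that(3,4) by (simp_all add: D_mult_composable)
    ultimately show ?thesis
      using \<open>drc_le_l D a b\<close> unfolding drc_le_l_iff by simp
  qed
  ultimately show ?thesis
    unfolding ordered_category_core_def
    using small_category partial_order_drc_le_l by blast
qed

lemma ordered_category_drc_le_r: "ordered_category_core UNIV D R (*) (drc_le_r D R)"
proof -
  have "drc_le_r D R (D a) (D b) \<and> drc_le_r D R (R a) (R b)" if "drc_le_r D R a b" for a b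
  proof -
    from that have "proj_le (R a) (R b)" and "a = b * R a"
      unfolding drc_le_r_iff by simp_all
    moreover from \<open>a = b * R a\<close> have "proj_le (D a) (D b)"
      by (metis D_mult_le)
    ultimately show ?thesis
      by (simp add: drc_le_r_objects D_D D_R)
  qed
  moreover have "drc_le_r D R (a * c) (b * c')"
    if "drc_le_r D R a b" "drc_le_r D R c c'" "R a = D c" "R b = D c'" for a b c c'
  proof -
    from that have "a * c = b * D c * c"
      unfolding drc_le_r_iff by metis
    also have "\<dots> = (b * c') * R c"
      using \<open>drc_le_r D R c c'\<close> unfolding drc_le_r_iff by (metis D_mult_self mult.assoc)
    finally have "a * c = (b * c') * R c" .
    moreover have "R (a * c) = R c" and "R (b * c') = R c'"
      using that(3,4) by (simp_all add: R_mult_composable)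
    ultimately show ?thesis
      using \<open>drc_le_r D R c c'\<close> unfolding drc_le_r_iff by simp
  qed
  ultimately show ?thesis
    unfolding ordered_category_core_def
    using small_category partial_order_drc_le_r by blast
qed

lemma drc_le_l_with_domain_iff:
  assumes "D p = p" and "proj_le p (D a)"
  shows "drc_le_l D u a \<and> D u = p \<longleftrightarrow> u = p * a"
  using assms by (auto simp: drc_le_l_iff D_proj_mult)

lemma drc_le_r_with_codomain_iff:
  assumes "D q = q" and "proj_le q (R a)"
  shows "drc_le_r D R v a \<and> R v = q \<longleftrightarrow> v = a * q"
  using assms by (auto simp: drc_le_r_iff R_mult_proj)

lemma left_ordered_category: "left_ordered_category UNIV D R (*) (drc_le_l D)"
  unfolding left_ordered_category_def cat_objects_eq_projections projections_eq
  using ordered_category_drc_le_l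
  by (simp add: drc_le_l_objects D_D drc_le_l_with_domain_iff)

lemma right_ordered_category: "right_ordered_category UNIV D R (*) (drc_le_r D R)"
  unfolding right_ordered_category_def cat_objects_eq_projections projections_eq
  using ordered_category_drc_le_r
  by (simp add: drc_le_r_objects D_R drc_le_r_with_codomain_iff)

lemma left_restriction_eq:
  "D p = p \<Longrightarrow> proj_le p (D a) \<Longrightarrow> left_restriction D (drc_le_l D) p a = p * a"
  unfolding left_restriction_def by (simp add: drc_le_l_with_domain_iff)

lemma right_restriction_eq:
  "D q = q \<Longrightarrow> proj_le q (R a) \<Longrightarrow> right_restriction R (drc_le_r D R) a q = a * q"
  unfolding right_restriction_def by (simp add: drc_le_r_with_codomain_iff)

end

theorem proposition3p10:
  fixes D R :: "'a::semigroup_mult \<Rightarrow> 'a"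
  assumes "DRC_semigroup D R"
  shows "biordered_category UNIV D R (*) (drc_le_l D) (drc_le_r D R)
       \<and> (\<forall>a. \<forall>p\<in>projections D. proj_le p (D a) \<longrightarrow>
             left_restriction D (drc_le_l D) p a = p * a)
       \<and> (\<forall>a. \<forall>q\<in>projections D. proj_le q (R a) \<longrightarrow>
             right_restriction R (drc_le_r D R) a q = a * q)"
proof -
  interpret drc_semigroup D R
    using assms by unfold_locales
  have "biordered_category UNIV D R (*) (drc_le_l D) (drc_le_r D R)"
    unfolding biordered_category_def cat_objects_eq_projections projections_eq
    using left_ordered_category right_ordered_category
    by (simp add: drc_le_l_objects drc_le_r_objects)
  then show ?thesis
    by (simp add: projections_eq left_restriction_eq right_restriction_eq)
qed

end
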